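(* Let $\mathbf{F}$ be a finite field with $q$ elements, let $A=\operatorname{diag}(J_{r_1}(0),\dots,J_{r_s}(0))$ with $r_1,\dots,r_s>0$ and $r_1+\dots+r_s=n$ (allowing $s=0$, $n=0$), let $\ell\ge0$, and set $A'=\operatorname{diag}(I_\ell,A)\in M_{\ell+n}(\mathbf{F})$. For $j\ge0$ let $e(A',j)$ be the number of semi-idempotent matrices $C$ obtained from $A'$ by replacing its last column by an arbitrary column such that $\mathrm{srk}\,C=j$, and for $i,j\ge0$ let $e(A',i,j)$ be the number of such $C$ with $\operatorname{rank} C=i$ and $\mathrm{srk}\,C=j$. Then (a) $e(A',\mathrm{srk}\,A')=q^{\mathrm{srk}\,A'}\,e(A',\mathrm{srk}\,A'+1)$; (b) if $s>0$ and $r_s>1$, then $e(A',\operatorname{rank}A',\mathrm{srk}\,A')=q^{\mathrm{srk}\,A'}\,e(A',\operatorname{rank}A',\mathrm{srk}\,A'+1)$.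
   Context: $J_\ell(0)$ is the lower $\ell\times\ell$ Jordan block with eigenvalue $0$ (ones directly below the diagonal). A square matrix $C$ is semi-idempotent if the space decomposes as $X\oplus Y$ into $C$-stable subspaces with $C|_X$ the identity and $C|_Y$ nilpotent. The stable rank $\mathrm{srk}\,C$ is the rank of $C^i$ for $i\gg0$ (so $\mathrm{srk}\,A'=\ell$). *)

theory Defs
  imports "Jordan_Normal_Form.DL_Rank"
begin

definition lower_jordan_zero :: "nat \<Rightarrow> 'a::{zero,one} mat" where
  "lower_jordan_zero k = mat k k (\<lambda>(i, j). if i = Suc j then 1 else 0)"

definition is_subspace :: "nat \<Rightarrow> 'a::field vec set \<Rightarrow> bool" where
  "is_subspace N U \<longleftrightarrow> U \<subseteq> carrier_vec N \<and> 0\<^sub>v N \<in> U \<and>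
     (\<forall>u\<in>U. \<forall>v\<in>U. u + v \<in> U) \<and> (\<forall>a. \<forall>u\<in>U. a \<cdot>\<^sub>v u \<in> U)"

definition semi_idempotent :: "nat \<Rightarrow> 'a::field mat \<Rightarrow> bool" where
  "semi_idempotent N C \<longleftrightarrow> C \<in> carrier_mat N N \<and>
     (\<exists>X Y. is_subspace N X \<and> is_subspace N Y \<and>
        (\<forall>v\<in>carrier_vec N. \<exists>!p. fst p \<in> X \<and> snd p \<in> Y \<and> v = fst p + snd p) \<and>
        (\<forall>x\<in>X. C *\<^sub>v x \<in> X) \<and> (\<forall>y\<in>Y. C *\<^sub>v y \<in> Y) \<and>
        (\<forall>x\<in>X. C *\<^sub>v x = x) \<and>
        (\<exists>k. \<forall>y\<in>Y. (C ^\<^sub>m k) *\<^sub>v y = 0\<^sub>v N))"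

abbreviation mrank :: "nat \<Rightarrow> 'a::field mat \<Rightarrow> nat" where
  "mrank N C \<equiv> vec_space.rank N C"

definition srk :: "nat \<Rightarrow> 'a::field mat \<Rightarrow> nat" where
  "srk N C = (THE r. \<exists>i0. \<forall>i\<ge>i0. mrank N (C ^\<^sub>m i) = r)"

definition A_prime :: "nat \<Rightarrow> nat list \<Rightarrow> 'a::field mat" where
  "A_prime l rs = diag_block_mat [1\<^sub>m l, diag_block_mat (map lower_jordan_zero rs)]"

definition last_col_repl :: "nat \<Rightarrow> 'a::field mat \<Rightarrow> 'a mat set" where
  "last_col_repl N B = {C \<in> carrier_mat N N. \<forall>i<N. \<forall>j<N. j \<noteq> N - 1 \<longrightarrow> C $$ (i, j) = B $$ (i, j)}"

definition e_count :: "nat \<Rightarrow> 'a::field mat \<Rightarrow> nat \<Rightarrow> nat" where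
  "e_count N B j = card {C \<in> last_col_repl N B. semi_idempotent N C \<and> srk N C = j}"

definition e_count2 :: "nat \<Rightarrow> 'a::field mat \<Rightarrow> nat \<Rightarrow> nat \<Rightarrow> nat" where
  "e_count2 N B i j = card {C \<in> last_col_repl N B. semi_idempotent N C \<and> mrank N C = i \<and> srk N C = j}"

end

theory Submission
  imports Defs
begin

(* Write C for A' with its last column replaced by c, N = l + r_1 + ... + r_s, and {p..<N} for
   the indices of the last Jordan block.  C is semi-idempotent iff C^(k+1) = C^k for some k, and
   then srk C = rank C^k.  On the last block C acts as a shift fed by the last coordinate through c.
   Hence a semi-idempotent C has either c = 0 on the last block, and then srk C = l, or c = e_(N-1)
   on the last block and c = 0 on the first l coordinates, and then srk C = l + 1; conversely both
   conditions give C^(K+1) = C^K for K = r_1 + ... + r_s + r_s.  Forgetting the first l coordinates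
   of c and switching its last coordinate from 0 to 1 is then a q^l-to-one correspondence between
   the two sets of last columns.  For (b), rank C = rank A' iff c vanishes on the rows where a
   Jordan block starts; when r_s > 1 this condition involves neither the first l coordinates nor
   the last one, so the same correspondence applies. *)

section \<open>Powers of a square matrix\<close>

declare pow_mat.simps(2) [simp del]

lemma pow_mat_Suc_left:
  assumes "A \<in> carrier_mat n n"
  shows "A ^\<^sub>m Suc k = A * A ^\<^sub>m k"
proof (induction k)
  case (Suc k)
  have "A ^\<^sub>m Suc (Suc k) = (A * A ^\<^sub>m k) * A" by (simp only: pow_mat.simps(2)[of A "Suc k"] Suc)
  also have "\<dots> = A * (A ^\<^sub>m k * A)" by (rule assoc_mult_mat) (use assms in auto)
  finally show ?case by (simp only: pow_mat.simps(2))
qed (use assms in \<open>simp add: pow_mat.simps(2)\<close>)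

lemma pow_mat_Suc_mult_vec:
  assumes "A \<in> carrier_mat n n" and "v \<in> carrier_vec n"
  shows "(A ^\<^sub>m Suc k) *\<^sub>v v = A *\<^sub>v ((A ^\<^sub>m k) *\<^sub>v v)"
  unfolding pow_mat_Suc_left[OF assms(1)] by (rule assoc_mult_mat_vec) (use assms in auto)

lemma pow_mat_Suc_mult_vec_right:
  assumes "A \<in> carrier_mat n n" and "v \<in> carrier_vec n"
  shows "(A ^\<^sub>m Suc k) *\<^sub>v v = (A ^\<^sub>m k) *\<^sub>v (A *\<^sub>v v)"
  unfolding pow_mat.simps(2) by (rule assoc_mult_mat_vec) (use assms in auto)

lemma pow_mat_mult_vec_carrier [simp]:
  "A \<in> carrier_mat n n \<Longrightarrow> v \<in> carrier_vec n \<Longrightarrow> (A ^\<^sub>m k) *\<^sub>v v \<in> carrier_vec n"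
  by (rule mult_mat_vec_carrier[OF pow_carrier_mat])

lemma pow_mat_add_mult_vec:
  assumes "A \<in> carrier_mat n n" and "v \<in> carrier_vec n"
  shows "(A ^\<^sub>m (a + b)) *\<^sub>v v = (A ^\<^sub>m a) *\<^sub>v ((A ^\<^sub>m b) *\<^sub>v v)"
proof (induction a)
  case (Suc a)
  have "(A ^\<^sub>m (Suc a + b)) *\<^sub>v v = A *\<^sub>v ((A ^\<^sub>m a) *\<^sub>v ((A ^\<^sub>m b) *\<^sub>v v))"
    by (simp only: add_Suc pow_mat_Suc_mult_vec[OF assms] Suc.IH)
  also have "\<dots> = (A ^\<^sub>m Suc a) *\<^sub>v ((A ^\<^sub>m b) *\<^sub>v v)"
    by (rule pow_mat_Suc_mult_vec[symmetric, OF assms(1)]) (use assms in simp)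
  finally show ?case .
qed (use assms in simp)

lemma pow_mat_mult_vec_fixed:
  assumes "A \<in> carrier_mat n n" and "v \<in> carrier_vec n" and "A *\<^sub>v v = v"
  shows "(A ^\<^sub>m k) *\<^sub>v v = v"
proof (induction k)
  case (Suc k)
  then show ?case unfolding pow_mat_Suc_mult_vec[OF assms(1,2)] using assms(3) by simp
qed (use assms in simp)

lemma pow_mat_stable:
  assumes "A ^\<^sub>m Suc k = A ^\<^sub>m k" and "k \<le> i"
  shows "A ^\<^sub>m i = A ^\<^sub>m k"
  using assms(2)
proof (induction i rule: dec_induct)
  case (step i)
  have "A ^\<^sub>m Suc i = A ^\<^sub>m k * A" by (simp add: step.IH pow_mat.simps(2))
  then show ?case using assms(1) by (simp add: pow_mat.simps(2))
qed simp

lemma pow_mat_stable_fixed: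
  assumes "A \<in> carrier_mat n n" and "A ^\<^sub>m Suc k = A ^\<^sub>m k" and "k \<le> m"
    and "v \<in> carrier_vec n"
  shows "A *\<^sub>v ((A ^\<^sub>m m) *\<^sub>v v) = (A ^\<^sub>m m) *\<^sub>v v"
proof -
  have "A ^\<^sub>m Suc m = A ^\<^sub>m m"
    using pow_mat_stable[OF assms(2)] assms(3) by (metis le_SucI)
  then show ?thesis using pow_mat_Suc_mult_vec[OF assms(1,4), of m] by simp
qed

lemma set_cols_eq: "set (cols A) = col A ` {..<dim_col A}"
  unfolding cols_def by auto

lemma col_eq_mult_unit_vec:
  fixes A :: "'a::semiring_1 mat"
  assumes "A \<in> carrier_mat n n" and "j < n"
  shows "col A j = A *\<^sub>v unit_vec n j"
  by (rule eq_vecI) (use assms in auto)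

lemma col_stable_pow_fixed:
  assumes "A \<in> carrier_mat n n" and "A ^\<^sub>m Suc k = A ^\<^sub>m k" and "j < n"
  shows "A *\<^sub>v col (A ^\<^sub>m k) j = col (A ^\<^sub>m k) j"
  using pow_mat_stable_fixed[OF assms(1,2) le_refl, of "unit_vec n j"] assms
  by (simp add: col_eq_mult_unit_vec[of _ n])

lemma mat_eqI_mult_vec:
  fixes A :: "'a::semiring_1 mat"
  assumes "A \<in> carrier_mat n n" and "B \<in> carrier_mat n n"
    and "\<And>v. v \<in> carrier_vec n \<Longrightarrow> A *\<^sub>v v = B *\<^sub>v v"
  shows "A = B"
proof (rule mat_col_eqI)
  fix j assume "j < dim_col B"
  then show "col A j = col B j"
    using assms col_eq_mult_unit_vec[OF assms(1)] col_eq_mult_unit_vec[OF assms(2)] by simp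
qed (use assms in auto)

section \<open>Semi-idempotent matrices\<close>

lemma mult_mat_zero_vec:
  fixes A :: "'a::semiring_0 mat"
  assumes "A \<in> carrier_mat m n"
  shows "A *\<^sub>v 0\<^sub>v n = 0\<^sub>v m"
  by (rule eq_vecI) (use assms in auto)

lemma is_subspace_kernel:
  fixes A :: "'a::field mat"
  assumes A: "A \<in> carrier_mat m n"
  shows "is_subspace n {v \<in> carrier_vec n. A *\<^sub>v v = 0\<^sub>v m}"
  unfolding is_subspace_def
  using mult_mat_zero_vec[OF A] mult_add_distrib_mat_vec[OF A] mult_mat_vec[OF A] by auto

lemma is_subspace_fixed_vecs:
  fixes A :: "'a::field mat"
  assumes A: "A \<in> carrier_mat n n"
  shows "is_subspace n {v \<in> carrier_vec n. A *\<^sub>v v = v}"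
  unfolding is_subspace_def
  using mult_mat_zero_vec[OF A] mult_add_distrib_mat_vec[OF A] mult_mat_vec[OF A] by auto

lemma srk_eq_rank_stable_pow:
  fixes A :: "'a::field mat"
  assumes "A ^\<^sub>m Suc k = A ^\<^sub>m k"
  shows "srk n A = mrank n (A ^\<^sub>m k)"
  unfolding srk_def
proof (rule the_equality)
  show "\<exists>i0. \<forall>i\<ge>i0. mrank n (A ^\<^sub>m i) = mrank n (A ^\<^sub>m k)"
  proof (intro exI allI impI)
    fix i assume "k \<le> i"
    then have "A ^\<^sub>m i = A ^\<^sub>m k" by (rule pow_mat_stable[OF assms])
    then show "mrank n (A ^\<^sub>m i) = mrank n (A ^\<^sub>m k)" by simp
  qed
next
  fix r assume "\<exists>i0. \<forall>i\<ge>i0. mrank n (A ^\<^sub>m i) = r"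
  then obtain i0 where "\<forall>i\<ge>i0. mrank n (A ^\<^sub>m i) = r" by blast
  then have "mrank n (A ^\<^sub>m max i0 k) = r" by simp
  then show "r = mrank n (A ^\<^sub>m k)"
    using pow_mat_stable[OF assms, of "max i0 k"] by simp
qed

lemma semi_idempotent_imp_pow_stable:
  fixes C :: "'a::field mat"
  assumes C: "C \<in> carrier_mat n n" and "semi_idempotent n C"
  obtains k where "C ^\<^sub>m Suc k = C ^\<^sub>m k"
proof -
  obtain X Y k where X: "is_subspace n X" "\<forall>x\<in>X. C *\<^sub>v x = x"
    and Y: "is_subspace n Y" "\<forall>y\<in>Y. (C ^\<^sub>m k) *\<^sub>v y = 0\<^sub>v n"
    and decomp: "\<forall>v\<in>carrier_vec n. \<exists>!q. fst q \<in> X \<and> snd q \<in> Y \<and> v = fst q + snd q"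
    using assms(2) unfolding semi_idempotent_def by blast
  have "(C ^\<^sub>m Suc k) *\<^sub>v v = (C ^\<^sub>m k) *\<^sub>v v" if v: "v \<in> carrier_vec n" for v
  proof -
    obtain q where q: "fst q \<in> X" "snd q \<in> Y" "v = fst q + snd q" using decomp v by blast
    define x y where "x = fst q" and "y = snd q"
    have x: "x \<in> carrier_vec n" "C *\<^sub>v x = x" and y: "y \<in> carrier_vec n"
      using q X Y unfolding x_def y_def is_subspace_def by auto
    have "(C ^\<^sub>m k) *\<^sub>v y = 0\<^sub>v n" using Y(2) q(2) y_def by simp
    then have "(C ^\<^sub>m Suc k) *\<^sub>v y = 0\<^sub>v n"
      using pow_mat_Suc_mult_vec[OF C y] mult_mat_zero_vec[OF C] by simp
    moreover have "(C ^\<^sub>m i) *\<^sub>v v = (C ^\<^sub>m i) *\<^sub>v x + (C ^\<^sub>m i) *\<^sub>v y" for i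
      unfolding q(3) x_def[symmetric] y_def[symmetric]
      by (rule mult_add_distrib_mat_vec[OF pow_carrier_mat[OF C] x(1) y(1)])
    ultimately show ?thesis
      using \<open>(C ^\<^sub>m k) *\<^sub>v y = 0\<^sub>v n\<close> x pow_mat_mult_vec_fixed[OF C x(1)]
      by simp
  qed
  then have "C ^\<^sub>m Suc k = C ^\<^sub>m k"
    by (rule mat_eqI_mult_vec[OF pow_carrier_mat[OF C] pow_carrier_mat[OF C]])
  then show thesis by (rule that)
qed

lemma fixed_kernel_decomposition:
  fixes C :: "'a::field mat"
  assumes C: "C \<in> carrier_mat n n" and stable: "C ^\<^sub>m Suc k = C ^\<^sub>m k" and v: "v \<in> carrier_vec n"
  shows "\<exists>!q. fst q \<in> {x \<in> carrier_vec n. C *\<^sub>v x = x} \<and>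
    snd q \<in> {y \<in> carrier_vec n. (C ^\<^sub>m k) *\<^sub>v y = 0\<^sub>v n} \<and> v = fst q + snd q"
proof
  define P where "P = C ^\<^sub>m k"
  have P: "P \<in> carrier_mat n n" unfolding P_def using C by simp
  have Pv: "P *\<^sub>v v \<in> carrier_vec n" "C *\<^sub>v (P *\<^sub>v v) = P *\<^sub>v v"
    unfolding P_def using pow_mat_stable_fixed[OF C stable le_refl v] C v by simp_all
  moreover have "P *\<^sub>v (v - P *\<^sub>v v) = 0\<^sub>v n"
    using pow_mat_mult_vec_fixed[OF C Pv] P v by (simp add: P_def mult_minus_distrib_mat_vec)
  moreover have "v = P *\<^sub>v v + (v - P *\<^sub>v v)" by (rule eq_vecI) (use Pv v P in auto)
  ultimately show "fst (P *\<^sub>v v, v - P *\<^sub>v v) \<in> {x \<in> carrier_vec n. C *\<^sub>v x = x} \<and>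
      snd (P *\<^sub>v v, v - P *\<^sub>v v) \<in> {y \<in> carrier_vec n. (C ^\<^sub>m k) *\<^sub>v y = 0\<^sub>v n} \<and>
      v = fst (P *\<^sub>v v, v - P *\<^sub>v v) + snd (P *\<^sub>v v, v - P *\<^sub>v v)"
    using Pv v unfolding P_def by auto
  fix q assume q: "fst q \<in> {x \<in> carrier_vec n. C *\<^sub>v x = x} \<and>
    snd q \<in> {y \<in> carrier_vec n. (C ^\<^sub>m k) *\<^sub>v y = 0\<^sub>v n} \<and> v = fst q + snd q"
  then have "P *\<^sub>v v = fst q"
    using pow_mat_mult_vec_fixed[OF C, of "fst q" k] P unfolding P_def by (auto simp: mult_add_distrib_mat_vec)
  moreover have "snd q = v - fst q" using q by auto
  ultimately show "q = (P *\<^sub>v v, v - P *\<^sub>v v)" by (simp add: prod_eq_iff)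
qed

lemma pow_stable_imp_semi_idempotent:
  fixes C :: "'a::field mat"
  assumes C: "C \<in> carrier_mat n n" and stable: "C ^\<^sub>m Suc k = C ^\<^sub>m k"
  shows "semi_idempotent n C"
  unfolding semi_idempotent_def
proof (intro conjI exI)
  define Y where "Y = {y \<in> carrier_vec n. (C ^\<^sub>m k) *\<^sub>v y = 0\<^sub>v n}"
  show "is_subspace n {x \<in> carrier_vec n. C *\<^sub>v x = x}" by (rule is_subspace_fixed_vecs[OF C])
  show "is_subspace n Y" unfolding Y_def by (rule is_subspace_kernel) (use C in simp)
  show "\<forall>v\<in>carrier_vec n. \<exists>!q. fst q \<in> {x \<in> carrier_vec n. C *\<^sub>v x = x} \<and> snd q \<in> Y \<and> v = fst q + snd q"
    unfolding Y_def using fixed_kernel_decomposition[OF C stable] by blast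
  show "\<forall>y\<in>Y. C *\<^sub>v y \<in> Y"
  proof
    fix y assume y: "y \<in> Y"
    then have "(C ^\<^sub>m k) *\<^sub>v (C *\<^sub>v y) = C *\<^sub>v ((C ^\<^sub>m k) *\<^sub>v y)"
      using pow_mat_Suc_mult_vec_right[OF C, of y k] pow_mat_Suc_mult_vec[OF C, of y k] unfolding Y_def by simp
    then show "C *\<^sub>v y \<in> Y" using y C mult_mat_zero_vec[OF C] unfolding Y_def by simp
  qed
  show "\<forall>y\<in>Y. (C ^\<^sub>m k) *\<^sub>v y = 0\<^sub>v n" unfolding Y_def by blast
qed (use C in auto)

section \<open>Rank via spanning sets of columns\<close>

context vec_space
begin

lemma rank_eq_card_indpt_spanning:
  assumes A: "A \<in> carrier_mat n nc" and S: "S \<subseteq> set (cols A)" "lin_indpt S"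
    and spanning: "set (cols A) \<subseteq> span S"
  shows "rank A = card S"
proof (rule rank_card_indpt[OF A])
  have cols: "set (cols A) \<subseteq> carrier_vec n" using A cols_dim by blast
  have "T = S" if T: "S \<subseteq> T" "T \<subseteq> set (cols A)" "lin_indpt T" for T
  proof (rule ccontr)
    assume "T \<noteq> S"
    then obtain x where x: "x \<in> T" "x \<notin> S" using T(1) by blast
    then have "lin_dep (S \<union> {x})"
      using lin_dep_iff_in_span[OF _ S(2), of x] S(1) T(2) spanning cols by blast
    moreover have "S \<union> {x} \<subseteq> T" using T(1) x(1) by blast
    ultimately show False using supset_ld_is_ld T(3) by blast
  qed
  then show "maximal S (\<lambda>T. T \<subseteq> set (cols A) \<and> lin_indpt T)"
    unfolding maximal_def using S by blast
qed

lemma in_span_unit_vecsI: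
  assumes I: "I \<subseteq> {..<n}" and v: "v \<in> carrier_vec n" and vanish: "\<forall>i<n. i \<notin> I \<longrightarrow> v $ i = 0"
  shows "v \<in> span (unit_vec n ` I)"
proof -
  have fin: "finite I" using I finite_subset by blast
  have U: "unit_vec n ` I \<subseteq> carrier_vec n" by auto
  have inj: "inj_on (unit_vec n) I" using I unfolding inj_on_def by auto
  have "lincomb (\<lambda>u. v \<bullet> u) (unit_vec n ` I) = v"
  proof (rule eq_vecI)
    fix i assume "i < dim_vec v"
    then have i: "i < n" using v by simp
    have "lincomb (\<lambda>u. v \<bullet> u) (unit_vec n ` I) $ i = (\<Sum>j\<in>I. (v \<bullet> unit_vec n j) * unit_vec n j $ i)"
      unfolding lincomb_index[OF i U] by (rule sum.reindex[OF inj, unfolded o_def])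
    also have "\<dots> = (\<Sum>j\<in>I. if j = i then v $ i else 0)"
      by (rule sum.cong) (use I v i in auto)
    also have "\<dots> = v $ i" using fin vanish i by simp
    finally show "lincomb (\<lambda>u. v \<bullet> u) (unit_vec n ` I) $ i = v $ i" .
  qed (use lincomb_closed[OF U] v in auto)
  from in_spanI[OF this[symmetric]] show ?thesis using fin by blast
qed

lemma lin_indpt_unit_vecs:
  assumes "I \<subseteq> {..<n}"
  shows "lin_indpt (unit_vec n ` I)"
proof (rule subset_li_is_li)
  show "lin_indpt (set (unit_vecs n))" using unit_vecs_basis unfolding basis_def by blast
  show "unit_vec n ` I \<subseteq> set (unit_vecs n)" using assms unfolding unit_vecs_def by auto
qed

lemma span_unit_vecs_vanishing:
  assumes I: "I \<subseteq> {..<n}" and u: "u \<in> span (unit_vec n ` I)" and j: "j < n" "j \<notin> I"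
  shows "u $ j = 0"
proof -
  obtain a A where A: "u = lincomb a A" "A \<subseteq> unit_vec n ` I" using in_spanE[OF u] by blast
  then have "A \<subseteq> carrier_vec n" by auto
  then have "u $ j = (\<Sum>w\<in>A. a w * w $ j)" using lincomb_index[OF j(1)] A(1) by blast
  also have "\<dots> = 0"
  proof (intro sum.neutral ballI)
    fix w assume "w \<in> A"
    then obtain i where "i \<in> I" "w = unit_vec n i" using A(2) by blast
    moreover have "i \<noteq> j" "i < n" using \<open>i \<in> I\<close> I j(2) by auto
    ultimately show "a w * w $ j = 0" using j(1) by simp
  qed
  finally show ?thesis .
qed

lemma lin_indpt_insert_unit_vecs:
  assumes I: "I \<subseteq> {..<n}" and x: "x \<in> carrier_vec n" and "j < n" "j \<notin> I" "x $ j \<noteq> 0"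
  shows "lin_indpt (insert x (unit_vec n ` I))"
proof -
  have U: "unit_vec n ` I \<subseteq> carrier_vec n" by auto
  have "x \<notin> span (unit_vec n ` I)" using span_unit_vecs_vanishing[OF I _ assms(3,4)] assms(5) by blast
  moreover have "x \<notin> unit_vec n ` I" using calculation in_own_span[OF U] by blast
  ultimately show ?thesis
    using lin_dep_iff_in_span[OF U lin_indpt_unit_vecs[OF I] x] by simp
qed

lemma add_smult_in_span_insert:
  assumes S: "S \<subseteq> carrier_vec n" and x: "x \<in> carrier_vec n" and u: "u \<in> span S"
  shows "u + a \<cdot>\<^sub>v x \<in> span (insert x S)"
proof -
  have S': "insert x S \<subseteq> carrier_vec n" using S x by simp
  have "span S \<subseteq> span (insert x S)" by (rule span_is_monotone) blast
  then have u': "u \<in> span (insert x S)" using u by blast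
  have "x \<in> span (insert x S)" using in_own_span[OF S'] by blast
  then have "a \<cdot>\<^sub>v x \<in> span (insert x S)" by (rule smult_in_span[OF S'])
  then show ?thesis by (rule span_add1[OF S' u'])
qed

lemma rank_of_cols_in_span_insert:
  assumes A: "A \<in> carrier_mat n nc" and E: "E \<subseteq> set (cols A)" "lin_indpt E"
    and c: "c \<in> set (cols A)" and cols: "set (cols A) \<subseteq> insert c (span E)"
  shows "rank A = card E + (if c \<in> span E then 0 else 1)"
proof (cases "c \<in> span E")
  case True
  then have "set (cols A) \<subseteq> span E" using cols by auto
  then show ?thesis using rank_eq_card_indpt_spanning[OF A E] True by simp
next
  case False
  have carrier: "E \<subseteq> carrier_vec n" "c \<in> carrier_vec n" "insert c E \<subseteq> carrier_vec n"
    using A cols_dim E(1) c by blast+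
  have "c \<notin> E" using False in_own_span[OF carrier(1)] by blast
  then have "lin_indpt (insert c E)"
    using lin_dep_iff_in_span[OF carrier(1) E(2) carrier(2)] False by simp
  moreover have "set (cols A) \<subseteq> span (insert c E)"
    using cols span_is_monotone[of E "insert c E"] in_own_span[OF carrier(3)] by blast
  ultimately have "rank A = card (insert c E)"
    using rank_eq_card_indpt_spanning[OF A] E(1) c by blast
  moreover have "finite E" using E(1) finite_subset by blast
  ultimately show ?thesis using False \<open>c \<notin> E\<close> by simp
qed

end

section \<open>Counting vectors and columns\<close>

lemma card_last_col_repl:
  fixes B :: "'a::field mat"
  assumes B: "B \<in> carrier_mat n n" and n: "0 < n"
  shows "card {C \<in> last_col_repl n B. Q (col C (n - 1))} = card {v \<in> carrier_vec n. Q v}"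
proof -
  define mk where "mk v = mat n n (\<lambda>(i, j). if j = n - 1 then v $ i else B $$ (i, j))" for v :: "'a vec"
  have col_mk: "col (mk v) (n - 1) = v" if "v \<in> carrier_vec n" for v
    unfolding mk_def using that n by (intro eq_vecI) auto
  have "bij_betw (\<lambda>C. col C (n - 1)) {C \<in> last_col_repl n B. Q (col C (n - 1))} {v \<in> carrier_vec n. Q v}"
  proof (rule bij_betwI[where g = mk])
    show "(\<lambda>C. col C (n - 1)) \<in> {C \<in> last_col_repl n B. Q (col C (n - 1))} \<rightarrow> {v \<in> carrier_vec n. Q v}"
      using n unfolding last_col_repl_def by auto
    show "mk \<in> {v \<in> carrier_vec n. Q v} \<rightarrow> {C \<in> last_col_repl n B. Q (col C (n - 1))}"
      using col_mk unfolding last_col_repl_def mk_def by auto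
    fix C assume C: "C \<in> {C \<in> last_col_repl n B. Q (col C (n - 1))}"
    show "mk (col C (n - 1)) = C"
      by (rule eq_matI) (use C n in \<open>auto simp: mk_def last_col_repl_def\<close>)
  qed (use col_mk in simp)
  then show ?thesis by (rule bij_betw_same_card)
qed

lemma card_vecs_last_zero:
  fixes G :: "'a::{zero,one,finite} vec \<Rightarrow> bool"
  assumes "l < n" and G: "\<And>v w. \<forall>i\<in>{l..<n - 1}. v $ i = w $ i \<Longrightarrow> G v = G w"
  shows "card {v \<in> carrier_vec n. G v \<and> v $ (n - 1) = 0} =
    card (UNIV :: 'a set) ^ l * card {v \<in> carrier_vec n. G v \<and> (\<forall>i<l. v $ i = 0) \<and> v $ (n - 1) = 1}"
proof -
  define A where "A = {v \<in> carrier_vec n. G v \<and> v $ (n - 1) = 0}"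
  define B where "B = {v \<in> carrier_vec n. G v \<and> (\<forall>i<l. v $ i = 0) \<and> v $ (n - 1) = (1::'a)}"
  define heads :: "(nat \<Rightarrow> 'a) set" where "heads = PiE {..<l} (\<lambda>_. UNIV)"
  define separate where "separate v = (restrict (\<lambda>i. v $ i) {..<l},
    vec n (\<lambda>i. if i < l then 0 else if i = n - 1 then 1 else v $ i))" for v :: "'a vec"
  define combine where "combine fb = vec n (\<lambda>i. if i < l then fst fb i else if i = n - 1 then 0 else snd fb $ i)"
    for fb :: "(nat \<Rightarrow> 'a) \<times> 'a vec"
  have last: "n - 1 < n" "\<not> n - 1 < l" using assms(1) by auto
  have "bij_betw separate A (heads \<times> B)"
  proof (rule bij_betwI[where g = combine])
    have "G (vec n (\<lambda>i. if i < l then 0 else if i = n - 1 then 1 else v $ i)) = G v" for v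
      by (rule G) auto
    then show "separate \<in> A \<rightarrow> heads \<times> B" using last unfolding A_def B_def heads_def separate_def by auto
    have "G (combine fb) = G (snd fb)" for fb unfolding combine_def by (rule G) auto
    then show "combine \<in> heads \<times> B \<rightarrow> A" using last unfolding A_def B_def combine_def by auto
    fix v assume "v \<in> A"
    then show "combine (separate v) = v" unfolding combine_def separate_def A_def using last by (intro eq_vecI) auto
  next
    fix fb assume "fb \<in> heads \<times> B"
    then obtain f b where fb: "fb = (f, b)" "f \<in> heads" "b \<in> B" by blast
    have "restrict (\<lambda>i. combine fb $ i) {..<l} = f"
      using fb(2) assms(1) unfolding combine_def heads_def fb(1) by (auto simp: PiE_def extensional_def)
    moreover have "vec n (\<lambda>i. if i < l then 0 else if i = n - 1 then 1 else combine fb $ i) = b"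
      using fb(3) last unfolding combine_def B_def fb(1) by (intro eq_vecI) auto
    ultimately show "separate (combine fb) = fb" unfolding separate_def fb(1) by simp
  qed
  then have "card A = card heads * card B" by (simp add: bij_betw_same_card card_cartesian_product)
  then show ?thesis unfolding A_def B_def heads_def by (simp add: card_PiE)
qed

section \<open>The block structure of \<open>A_prime\<close>\<close>

fun block_start :: "nat list \<Rightarrow> nat \<Rightarrow> bool" where
  "block_start [] i = False"
| "block_start (r # rs) i \<longleftrightarrow> i = 0 \<or> (r \<le> i \<and> block_start rs (i - r))"

lemma block_start_0: "rs \<noteq> [] \<Longrightarrow> block_start rs 0"
  by (cases rs) auto

lemma block_start_last:
  assumes "rs \<noteq> []"
  shows "block_start rs (sum_list rs - last rs)"
  using assms
proof (induction rs)
  case (Cons r rs)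
  then show ?case using member_le_sum_list[OF last_in_set, of rs] by (cases "rs = []") auto
qed simp

lemma not_block_start_in_last_block:
  assumes "sum_list rs - last rs < i" and "i < sum_list rs"
  shows "\<not> block_start rs i"
  using assms
proof (induction rs arbitrary: i)
  case (Cons r rs)
  show ?case
  proof (cases "rs = []")
    case False
    then have "last rs \<le> sum_list rs" by (simp add: member_le_sum_list)
    then show ?thesis using Cons.IH[of "i - r"] Cons.prems False by auto
  qed (use Cons.prems in auto)
qed simp

lemma dim_lower_jordan_zero [simp]:
  "dim_row (lower_jordan_zero r) = r" "dim_col (lower_jordan_zero r) = r"
  by (simp_all add: lower_jordan_zero_def)

lemma dim_diag_jordan [simp]:
  "dim_row (diag_block_mat (map lower_jordan_zero rs) :: 'a::{zero,one} mat) = sum_list rs"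
  "dim_col (diag_block_mat (map lower_jordan_zero rs) :: 'a::{zero,one} mat) = sum_list rs"
  by (induction rs) (simp_all add: Let_def)

lemma index_diag_jordan:
  assumes "i < sum_list rs" and "j < sum_list rs"
  shows "(diag_block_mat (map lower_jordan_zero rs) :: 'a::{zero,one} mat) $$ (i, j) =
    (if i = Suc j \<and> \<not> block_start rs i then 1 else 0)"
  using assms
proof (induction rs arbitrary: i j)
  case (Cons r rs)
  let ?D = "diag_block_mat (map lower_jordan_zero rs) :: 'a mat"
  have split: "(diag_block_mat (map lower_jordan_zero (r # rs)) :: 'a mat) $$ (i, j) =
      (if i < r then if j < r then (lower_jordan_zero r :: 'a mat) $$ (i, j) else 0
       else if j < r then 0 else ?D $$ (i - r, j - r))"
    using Cons.prems by (simp add: Let_def)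
  consider "i < r" | "r \<le> i" "j < r" | "r \<le> i" "r \<le> j" by linarith
  then show ?case
  proof cases
    case 1
    then have "block_start (r # rs) i \<longleftrightarrow> i = 0" by auto
    then show ?thesis unfolding split using 1 by (simp add: lower_jordan_zero_def)
  next
    case 2
    then have "rs \<noteq> []" using Cons.prems by auto
    then show ?thesis unfolding split using 2 block_start_0 by auto
  next
    case 3
    then show ?thesis unfolding split using Cons.prems Cons.IH[of "i - r" "j - r"]
      by (auto simp: Suc_diff_le)
  qed
qed simp

lemma dim_A_prime [simp]:
  "dim_row (A_prime l rs :: 'a::field mat) = l + sum_list rs"
  "dim_col (A_prime l rs :: 'a::field mat) = l + sum_list rs"
  by (simp_all add: A_prime_def Let_def)

lemma A_prime_carrier: "(A_prime l rs :: 'a::field mat) \<in> carrier_mat (l + sum_list rs) (l + sum_list rs)"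
  by (rule carrier_matI) simp_all

lemma index_A_prime:
  assumes "rs \<noteq> []" and i: "i < l + sum_list rs" and j: "j < l + sum_list rs"
  shows "(A_prime l rs :: 'a::field mat) $$ (i, j) =
    (if i < l then (if i = j then 1 else 0) else if i = Suc j \<and> \<not> block_start rs (i - l) then 1 else 0)"
proof -
  have split: "(A_prime l rs :: 'a mat) $$ (i, j) =
      (if i < l then if j < l then (1\<^sub>m l :: 'a mat) $$ (i, j) else 0
       else if j < l then 0 else (diag_block_mat (map lower_jordan_zero rs) :: 'a mat) $$ (i - l, j - l))"
    using i j unfolding A_prime_def by (simp add: Let_def) linarith
  consider "i < l" | "l \<le> i" "j < l" | "l \<le> i" "l \<le> j" by linarith
  then show ?thesis
  proof cases
    case 2
    then have "i = Suc j \<longrightarrow> i - l = 0" by simp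
    then show ?thesis unfolding split using 2 block_start_0[OF assms(1)] by auto
  next
    case 3
    then have "i - l < sum_list rs" "j - l < sum_list rs" "i - l = Suc (j - l) \<longleftrightarrow> i = Suc j"
      using i j by linarith+
    then show ?thesis unfolding split using index_diag_jordan[of "i - l" rs "j - l"] 3 by simp
  qed (simp add: split)
qed

section \<open>Replacing the last column of \<open>A_prime\<close>\<close>

locale jordan_blocks =
  fixes l :: nat and rs :: "nat list"
  assumes blocks_pos: "\<forall>r\<in>set rs. 0 < r" and blocks_nonempty: "rs \<noteq> []"
begin

abbreviation N :: nat where "N \<equiv> l + sum_list rs"

text \<open>The last Jordan block occupies the indices \<open>{p..<N}\<close>.\<close>
abbreviation p :: nat where "p \<equiv> N - last rs"

lemma last_block_pos: "0 < last rs"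
  using blocks_pos last_in_set[OF blocks_nonempty] by blast

lemma last_block_le: "last rs \<le> sum_list rs"
  using member_le_sum_list[OF last_in_set[OF blocks_nonempty]] by simp

lemma l_le_p: "l \<le> p" and p_less_N: "p < N" and N_pos: "0 < N"
  using last_block_le last_block_pos by linarith+

lemma l_less_N: "l < N"
  using l_le_p p_less_N by (rule le_less_trans)

lemma block_start_l: "block_start rs 0"
  by (rule block_start_0[OF blocks_nonempty])

lemma block_start_p: "block_start rs (p - l)"
  using block_start_last[OF blocks_nonempty] last_block_le by (simp add: add.commute)

definition nonzero_rows :: "nat set" where
  "nonzero_rows = {i. i < N \<and> (i < l \<or> \<not> block_start rs (i - l))}"

lemma not_block_start_after_p:
  assumes "p < i" and "i < N"
  shows "\<not> block_start rs (i - l)"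
  using not_block_start_in_last_block[of rs "i - l"] assms last_block_le by linarith

end

locale last_col_repl_A_prime = jordan_blocks +
  fixes C :: "'a::field mat"
  assumes C_in: "C \<in> last_col_repl N (A_prime l rs)"
begin

abbreviation c :: "'a vec" where "c \<equiv> col C (N - 1)"

interpretation V: vec_space "TYPE('a)" N .

lemma C_carrier: "C \<in> carrier_mat N N"
  using C_in unfolding last_col_repl_def by simp

lemma c_carrier: "c \<in> carrier_vec N"
  by (rule col_carrier_vec[OF _ C_carrier]) (use p_less_N in simp)

lemma index_C:
  assumes "i < N" and "j < N" and "j \<noteq> N - 1"
  shows "C $$ (i, j) =
    (if i < l then (if i = j then 1 else 0) else if i = Suc j \<and> \<not> block_start rs (i - l) then 1 else 0)"
  using C_in assms index_A_prime[OF blocks_nonempty assms(1,2)] unfolding last_col_repl_def by auto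

lemma index_mult_vec_C:
  assumes v: "v \<in> carrier_vec N" and i: "i < N"
  shows "(C *\<^sub>v v) $ i =
    (if i < l then v $ i else if block_start rs (i - l) then 0 else v $ (i - 1)) + c $ i * v $ (N - 1)"
proof -
  have pos: "0 < i" if "\<not> i < l" "\<not> block_start rs (i - l)"
    using that block_start_l by (cases "i = l") auto
  have "(C *\<^sub>v v) $ i = (\<Sum>j\<in>{0..<N}. C $$ (i, j) * v $ j)"
    using C_carrier v i by (simp add: scalar_prod_def)
  also have "\<dots> = (\<Sum>j\<in>{0..<N}. (if j = N - 1 then c $ i * v $ (N - 1) else 0)
      + (if i < l then (if j = i then v $ i else 0)
         else if j = i - 1 \<and> 0 < i \<and> \<not> block_start rs (i - l) then v $ j else 0))"
  proof (rule sum.cong[OF refl])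
    fix j assume "j \<in> {0..<N}"
    then have j: "j < N" by simp
    have "i \<noteq> Suc (N - 1)" using i by simp
    then show "C $$ (i, j) * v $ j = (if j = N - 1 then c $ i * v $ (N - 1) else 0)
      + (if i < l then (if j = i then v $ i else 0)
         else if j = i - 1 \<and> 0 < i \<and> \<not> block_start rs (i - l) then v $ j else 0)"
      using i j l_le_p p_less_N C_carrier
      by (cases "j = N - 1"; cases "i < l") (auto simp: index_C)
  qed
  also have "\<dots> = c $ i * v $ (N - 1) +
      (if i < l then v $ i else if block_start rs (i - l) then 0 else v $ (i - 1))"
    using i l_le_p p_less_N pos
    by (cases "i < l"; cases "block_start rs (i - l)") (simp_all add: sum.distrib)
  finally show ?thesis by (simp add: add.commute)
qed

lemma index_mult_vec_C_top:
  assumes "v \<in> carrier_vec N" and "i < l"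
  shows "(C *\<^sub>v v) $ i = v $ i + c $ i * v $ (N - 1)"
  using index_mult_vec_C[OF assms(1)] assms(2) l_le_p p_less_N by simp

lemma index_mult_vec_C_last_block:
  assumes "v \<in> carrier_vec N" and "p \<le> i" and "i < N"
  shows "(C *\<^sub>v v) $ i = (if i = p then 0 else v $ (i - 1)) + c $ i * v $ (N - 1)"
proof -
  have "block_start rs (i - l) \<longleftrightarrow> i = p"
    using block_start_p not_block_start_after_p[of i] assms(2,3) by (cases "i = p") auto
  then show ?thesis using index_mult_vec_C[OF assms(1,3)] assms(2) l_le_p by simp
qed

lemma fixed_if_top_supported:
  assumes v: "v \<in> carrier_vec N" and vanish: "\<forall>i\<in>{l..<N}. v $ i = 0"
  shows "C *\<^sub>v v = v"
proof (rule eq_vecI)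
  fix i assume "i < dim_vec v"
  then have i: "i < N" using v by simp
  have "v $ (N - 1) = 0" using vanish l_le_p p_less_N by simp
  moreover have "v $ (i - 1) = 0" if "l \<le> i" "\<not> block_start rs (i - l)"
  proof -
    have "i \<noteq> l" using that block_start_l by auto
    then have "i - 1 \<in> {l..<N}" using that i by auto
    then show ?thesis using vanish by blast
  qed
  ultimately show "(C *\<^sub>v v) $ i = v $ i"
    using index_mult_vec_C[OF v i] vanish i by auto
qed (use v C_carrier in simp)

lemma fixed_vanishing_if_last_zero:
  assumes v: "v \<in> carrier_vec N" and fixed: "C *\<^sub>v v = v" and last: "v $ (N - 1) = 0"
  shows "\<forall>i\<in>{l..<N}. v $ i = 0"
proof
  fix i assume "i \<in> {l..<N}"
  then show "v $ i = 0"
  proof (induction i rule: less_induct)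
    case (less i)
    then have "v $ i = (if block_start rs (i - l) then 0 else v $ (i - 1))"
      using index_mult_vec_C[OF v, of i] fixed last by simp
    moreover have "v $ (i - 1) = 0" if "\<not> block_start rs (i - l)"
    proof -
      have "i \<noteq> l" using that block_start_l by auto
      then have "i - 1 < i" "i - 1 \<in> {l..<N}" using less.prems by auto
      then show ?thesis using less.IH by blast
    qed
    ultimately show ?case by simp
  qed
qed

lemma last_block_zeros_shift:
  assumes "t \<le> N" and c_vanish: "\<forall>i\<in>{p..<t}. c $ i = 0" and w: "w \<in> carrier_vec N"
    and w_vanish: "\<forall>i\<in>{p..<t}. i < p + m \<longrightarrow> w $ i = 0"
  shows "\<forall>i\<in>{p..<t}. i < p + Suc m \<longrightarrow> (C *\<^sub>v w) $ i = 0"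
proof (intro ballI impI)
  fix i assume i: "i \<in> {p..<t}" "i < p + Suc m"
  have "w $ (i - 1) = 0" if "i \<noteq> p"
  proof -
    have "i - 1 \<in> {p..<t}" "i - 1 < p + m" using that i by auto
    then show ?thesis using w_vanish by blast
  qed
  then show "(C *\<^sub>v w) $ i = 0"
    using index_mult_vec_C_last_block[OF w, of i] c_vanish i assms(1) by auto
qed

lemma last_block_decay:
  assumes "t \<le> N" and "\<forall>i\<in>{p..<t}. c $ i = 0" and v: "v \<in> carrier_vec N"
  shows "\<forall>i\<in>{p..<t}. i < p + m \<longrightarrow> ((C ^\<^sub>m m) *\<^sub>v v) $ i = 0"
proof (induction m)
  case (Suc m)
  then show ?case
    using last_block_zeros_shift[OF assms(1,2), of "(C ^\<^sub>m m) *\<^sub>v v" m] C_carrier v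
    by (simp add: pow_mat_Suc_mult_vec)
qed simp

lemma pow_C_of_last_block_zero:
  assumes y: "y \<in> carrier_vec N" and vanish: "\<forall>i\<in>{p..<N}. y $ i = 0"
  shows "(\<forall>i\<in>{l..<N}. (i < l + m \<or> p \<le> i) \<longrightarrow> ((C ^\<^sub>m m) *\<^sub>v y) $ i = 0) \<and>
    (\<forall>i<l. ((C ^\<^sub>m m) *\<^sub>v y) $ i = y $ i)"
proof (induction m)
  case 0
  then show ?case using vanish y C_carrier by auto
next
  case (Suc m)
  define w where "w = (C ^\<^sub>m m) *\<^sub>v y"
  have w: "w \<in> carrier_vec N" unfolding w_def using C_carrier y by simp
  have IH: "\<forall>i\<in>{l..<N}. (i < l + m \<or> p \<le> i) \<longrightarrow> w $ i = 0" "\<forall>i<l. w $ i = y $ i"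
    using Suc.IH unfolding w_def by auto
  have last: "w $ (N - 1) = 0" using IH(1) l_le_p p_less_N by simp
  have "(C *\<^sub>v w) $ i = 0" if i: "i \<in> {l..<N}" "i < l + Suc m \<or> p \<le> i" for i
  proof -
    have "w $ (i - 1) = 0" if "\<not> block_start rs (i - l)"
    proof -
      have "i \<noteq> l" "i \<noteq> p" using that block_start_l block_start_p by auto
      then have "i - 1 \<in> {l..<N}" "i - 1 < l + m \<or> p \<le> i - 1" using i by auto
      then show ?thesis using IH(1) by blast
    qed
    then show ?thesis using index_mult_vec_C[OF w] i last by auto
  qed
  moreover have "(C *\<^sub>v w) $ i = y $ i" if "i < l" for i
    using index_mult_vec_C_top[OF w that] IH(2) that last by simp
  ultimately show ?case
    using pow_mat_Suc_mult_vec[OF C_carrier y, of m] unfolding w_def by simp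
qed

lemma last_block_sum_invariant:
  assumes c_vanish: "\<forall>i\<in>{p..<N - 1}. c $ i = 0" and c_last: "c $ (N - 1) = 1"
    and v: "v \<in> carrier_vec N"
  shows "(\<Sum>i\<in>{p..<N}. (C *\<^sub>v v) $ i) = (\<Sum>i\<in>{p..<N}. v $ i)"
proof -
  have split: "{p..<N} = insert (N - 1) {p..<N - 1}" and last: "N - 1 \<in> {p..<N}"
    using p_less_N by auto
  have "(C *\<^sub>v v) $ i = (if i = p then 0 else v $ (i - 1)) + (if i = N - 1 then v $ (N - 1) else 0)"
    if "i \<in> {p..<N}" for i
    using index_mult_vec_C_last_block[OF v, of i] that c_vanish c_last by auto
  then have "(\<Sum>i\<in>{p..<N}. (C *\<^sub>v v) $ i) =
      (\<Sum>i\<in>{p..<N}. if i = p then 0 else v $ (i - 1)) + v $ (N - 1)"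
    using last by (simp add: sum.distrib)
  also have "(\<Sum>i\<in>{p..<N}. if i = p then 0 else v $ (i - 1)) = (\<Sum>i\<in>{Suc p..<N}. v $ (i - 1))"
    using p_less_N by (simp add: sum.atLeast_Suc_lessThan)
  also have "\<dots> = (\<Sum>i\<in>{p..<N - 1}. v $ i)"
  proof -
    have "Suc (N - 1) = N" using p_less_N by simp
    then show ?thesis using sum.shift_bounds_Suc_ivl[of "\<lambda>i. v $ (i - 1)" p "N - 1"] by simp
  qed
  finally show ?thesis unfolding split by (simp add: add.commute)
qed

lemma pow_C_last_block_sum:
  assumes "\<forall>i\<in>{p..<N - 1}. c $ i = 0" and "c $ (N - 1) = 1" and v: "v \<in> carrier_vec N"
  shows "(\<Sum>i\<in>{p..<N}. ((C ^\<^sub>m m) *\<^sub>v v) $ i) = (\<Sum>i\<in>{p..<N}. v $ i)"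
proof (induction m)
  case (Suc m)
  then show ?case
    using last_block_sum_invariant[OF assms(1,2), of "(C ^\<^sub>m m) *\<^sub>v v"] C_carrier v
    by (simp add: pow_mat_Suc_mult_vec)
qed (use C_carrier v in simp)

lemma pow_C_top_invariant:
  assumes "\<forall>i<l. c $ i = 0" and v: "v \<in> carrier_vec N" and "i < l"
  shows "((C ^\<^sub>m m) *\<^sub>v v) $ i = v $ i"
proof (induction m)
  case (Suc m)
  then show ?case
    using index_mult_vec_C_top[of "(C ^\<^sub>m m) *\<^sub>v v" i] assms C_carrier
    by (simp add: pow_mat_Suc_mult_vec)
qed (use C_carrier v in simp)

lemma pow_C_eq_if_agree:
  assumes a: "a \<in> carrier_vec N" and b: "b \<in> carrier_vec N"
    and agree: "\<forall>i. i < l \<or> p \<le> i \<and> i < N \<longrightarrow> a $ i = b $ i"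
  shows "(C ^\<^sub>m sum_list rs) *\<^sub>v a = (C ^\<^sub>m sum_list rs) *\<^sub>v b"
proof -
  define y where "y = a - b"
  have y: "y \<in> carrier_vec N" unfolding y_def using a b by simp
  have "\<forall>i\<in>{p..<N}. y $ i = 0" "\<forall>i<l. y $ i = 0"
    unfolding y_def using a b agree l_le_p by auto
  then have "(C ^\<^sub>m sum_list rs) *\<^sub>v y = 0\<^sub>v N"
    using pow_C_of_last_block_zero[OF y, of "sum_list rs"] C_carrier y
    by (intro eq_vecI) (auto simp: not_less)
  then have diff: "(C ^\<^sub>m sum_list rs) *\<^sub>v a - (C ^\<^sub>m sum_list rs) *\<^sub>v b = 0\<^sub>v N"
    unfolding y_def by (simp add: mult_minus_distrib_mat_vec[OF pow_carrier_mat[OF C_carrier] a b])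
  show ?thesis
  proof (rule eq_vecI)
    fix i assume "i < dim_vec ((C ^\<^sub>m sum_list rs) *\<^sub>v b)"
    then show "((C ^\<^sub>m sum_list rs) *\<^sub>v a) $ i = ((C ^\<^sub>m sum_list rs) *\<^sub>v b) $ i"
      using arg_cong[OF diff, of "\<lambda>z. z $ i"] C_carrier by simp
  qed (use C_carrier in simp)
qed

lemma pow_C_stable_if_last_block_zero:
  assumes c_vanish: "\<forall>i\<in>{p..<N}. c $ i = 0"
  shows "C ^\<^sub>m Suc (sum_list rs + last rs) = C ^\<^sub>m (sum_list rs + last rs)"
proof (rule mat_eqI_mult_vec[OF pow_carrier_mat[OF C_carrier] pow_carrier_mat[OF C_carrier]])
  fix v :: "'a vec" assume v: "v \<in> carrier_vec N"
  define w where "w = (C ^\<^sub>m last rs) *\<^sub>v v"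
  have w: "w \<in> carrier_vec N" unfolding w_def using C_carrier v by simp
  have "\<forall>i\<in>{p..<N}. w $ i = 0"
    using last_block_decay[OF le_refl c_vanish v, of "last rs"] last_block_le unfolding w_def by auto
  then have "\<forall>i\<in>{l..<N}. ((C ^\<^sub>m sum_list rs) *\<^sub>v w) $ i = 0"
    using pow_C_of_last_block_zero[OF w, of "sum_list rs"] by auto
  then have "C *\<^sub>v ((C ^\<^sub>m sum_list rs) *\<^sub>v w) = (C ^\<^sub>m sum_list rs) *\<^sub>v w"
    by (intro fixed_if_top_supported) (use C_carrier w in simp_all)
  then show "(C ^\<^sub>m Suc (sum_list rs + last rs)) *\<^sub>v v = (C ^\<^sub>m (sum_list rs + last rs)) *\<^sub>v v"
    unfolding w_def pow_mat_Suc_mult_vec[OF C_carrier v] pow_mat_add_mult_vec[OF C_carrier v] .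
qed

lemma pow_C_last_unit_vec:
  assumes "\<forall>i\<in>{p..<N - 1}. c $ i = 0" and "c $ (N - 1) = 1" and "last rs \<le> m"
  shows "((C ^\<^sub>m m) *\<^sub>v unit_vec N (N - 1)) $ (N - 1) = 1"
proof -
  define x where "x = (C ^\<^sub>m m) *\<^sub>v unit_vec N (N - 1)"
  have split: "{p..<N} = insert (N - 1) {p..<N - 1}" using p_less_N by auto
  have "\<forall>i\<in>{p..<N - 1}. x $ i = 0"
    using last_block_decay[OF _ assms(1), of "unit_vec N (N - 1)" m] assms(3) last_block_le
    unfolding x_def by auto
  then have "x $ (N - 1) = (\<Sum>i\<in>{p..<N}. x $ i)" unfolding split by simp
  also have "\<dots> = (\<Sum>i\<in>{p..<N}. unit_vec N (N - 1) $ i)"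
    unfolding x_def by (rule pow_C_last_block_sum[OF assms(1,2)]) simp
  also have "\<dots> = (\<Sum>i\<in>{p..<N}. if i = N - 1 then 1 else 0)" by (rule sum.cong) auto
  also have "\<dots> = 1" using split by simp
  finally show ?thesis unfolding x_def .
qed

text \<open>After \<open>r\<^sub>s\<close> steps a vector vanishes on the last block except at \<open>N - 1\<close>. As the sum
  over the last block and the first \<open>l\<close> coordinates are invariant under \<open>C\<close>, the vectors
  \<open>C ^ Suc r\<^sub>s v\<close> and \<open>C ^ r\<^sub>s v\<close> differ only on the middle blocks, where \<open>C\<close> is
  nilpotent.\<close>

lemma pow_C_stable_if_last_col_unit:
  assumes c_vanish: "\<forall>i\<in>{p..<N - 1}. c $ i = 0" and c_last: "c $ (N - 1) = 1"
    and c_top: "\<forall>i<l. c $ i = 0"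
  shows "C ^\<^sub>m Suc (sum_list rs + last rs) = C ^\<^sub>m (sum_list rs + last rs)"
proof (rule mat_eqI_mult_vec[OF pow_carrier_mat[OF C_carrier] pow_carrier_mat[OF C_carrier]])
  fix v :: "'a vec" assume v: "v \<in> carrier_vec N"
  define a b where "a = (C ^\<^sub>m Suc (last rs)) *\<^sub>v v" and "b = (C ^\<^sub>m last rs) *\<^sub>v v"
  have ab: "a \<in> carrier_vec N" "b \<in> carrier_vec N"
    unfolding a_def b_def using C_carrier v by simp_all
  have split: "{p..<N} = insert (N - 1) {p..<N - 1}" using p_less_N by auto
  have "\<forall>i\<in>{p..<N - 1}. a $ i = 0" "\<forall>i\<in>{p..<N - 1}. b $ i = 0"
    using last_block_decay[OF _ c_vanish v] last_block_le unfolding a_def b_def by auto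
  moreover have "(\<Sum>i\<in>{p..<N}. a $ i) = (\<Sum>i\<in>{p..<N}. b $ i)"
    using pow_C_last_block_sum[OF c_vanish c_last v] unfolding a_def b_def by simp
  ultimately have "\<forall>i\<in>{p..<N}. a $ i = b $ i" unfolding split by simp
  moreover have "\<forall>i<l. a $ i = b $ i"
    using pow_C_top_invariant[OF c_top v] unfolding a_def b_def by simp
  ultimately have "(C ^\<^sub>m sum_list rs) *\<^sub>v a = (C ^\<^sub>m sum_list rs) *\<^sub>v b"
    by (intro pow_C_eq_if_agree ab) auto
  then show "(C ^\<^sub>m Suc (sum_list rs + last rs)) *\<^sub>v v = (C ^\<^sub>m (sum_list rs + last rs)) *\<^sub>v v"
    unfolding a_def b_def add_Suc_right[symmetric] pow_mat_add_mult_vec[OF C_carrier v] .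
qed

lemma fixed_vanishing_if_last_block_zero:
  assumes c_vanish: "\<forall>i\<in>{p..<N}. c $ i = 0" and v: "v \<in> carrier_vec N" and fixed: "C *\<^sub>v v = v"
  shows "\<forall>i\<in>{l..<N}. v $ i = 0"
proof (rule fixed_vanishing_if_last_zero[OF v fixed])
  have "N - 1 \<in> {p..<N}" "N - 1 < p + last rs" using p_less_N by auto
  then show "v $ (N - 1) = 0"
    using last_block_decay[OF le_refl c_vanish v, of "last rs"]
      pow_mat_mult_vec_fixed[OF C_carrier v fixed] by auto
qed

lemma top_unit_vecs_subset_cols_pow_C:
  "unit_vec N ` {..<l} \<subseteq> set (cols (C ^\<^sub>m m))"
proof
  fix x :: "'a vec" assume "x \<in> unit_vec N ` {..<l}"
  then obtain i where i: "i < l" "x = unit_vec N i" by blast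
  then have "i < N" using l_le_p p_less_N by simp
  moreover have "C *\<^sub>v unit_vec N i = unit_vec N i" by (rule fixed_if_top_supported) (use i in auto)
  ultimately have "x = col (C ^\<^sub>m m) i"
    using i col_eq_mult_unit_vec[OF pow_carrier_mat[OF C_carrier]]
      pow_mat_mult_vec_fixed[OF C_carrier unit_vec_carrier] by simp
  then show "x \<in> set (cols (C ^\<^sub>m m))"
    using \<open>i < N\<close> C_carrier unfolding set_cols_eq by simp
qed

lemma card_top_unit_vecs: "card (unit_vec N ` {..<l} :: 'a vec set) = l"
  using l_le_p p_less_N by (subst card_image) (auto simp: inj_on_def)

lemma in_span_top_unit_vecsI:
  assumes "u \<in> carrier_vec N" and "\<forall>i\<in>{l..<N}. u $ i = 0"
  shows "u \<in> V.span (unit_vec N ` {..<l})"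
  using assms l_less_N by (intro V.in_span_unit_vecsI) auto

lemma semi_idempotent_srk_if_last_block_zero:
  assumes c_vanish: "\<forall>i\<in>{p..<N}. c $ i = 0"
  shows "semi_idempotent N C \<and> srk N C = l"
proof -
  define K where "K = sum_list rs + last rs"
  have stable: "C ^\<^sub>m Suc K = C ^\<^sub>m K"
    using pow_C_stable_if_last_block_zero[OF c_vanish] unfolding K_def .
  have P: "C ^\<^sub>m K \<in> carrier_mat N N" using C_carrier by simp
  define E where "E = (unit_vec N ` {..<l} :: 'a vec set)"
  have "set (cols (C ^\<^sub>m K)) \<subseteq> V.span E"
  proof
    fix u assume "u \<in> set (cols (C ^\<^sub>m K))"
    then obtain j where j: "j < N" "u = col (C ^\<^sub>m K) j" using P unfolding set_cols_eq by auto
    then have "u \<in> carrier_vec N" "C *\<^sub>v u = u"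
      using P col_stable_pow_fixed[OF C_carrier stable] by auto
    then show "u \<in> V.span E" unfolding E_def
      by (intro in_span_top_unit_vecsI fixed_vanishing_if_last_block_zero[OF c_vanish])
  qed
  then have "V.rank (C ^\<^sub>m K) = card E"
    using V.rank_eq_card_indpt_spanning[OF P] top_unit_vecs_subset_cols_pow_C
      V.lin_indpt_unit_vecs[of "{..<l}"] l_le_p p_less_N unfolding E_def by auto
  then show ?thesis
    using pow_stable_imp_semi_idempotent[OF C_carrier stable] srk_eq_rank_stable_pow[OF stable]
      card_top_unit_vecs unfolding E_def by simp
qed

lemma fixed_in_span_insert_top_unit_vecs:
  assumes x: "x \<in> carrier_vec N" "C *\<^sub>v x = x" "x $ (N - 1) = 1"
    and u: "u \<in> carrier_vec N" "C *\<^sub>v u = u"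
  shows "u \<in> V.span (insert x (unit_vec N ` {..<l}))"
proof -
  define u' where "u' = u - (u $ (N - 1)) \<cdot>\<^sub>v x"
  have "u' \<in> carrier_vec N" "C *\<^sub>v u' = u'" "u' $ (N - 1) = 0"
    unfolding u'_def using u x C_carrier p_less_N by (simp_all add: mult_minus_distrib_mat_vec mult_mat_vec)
  then have "u' \<in> V.span (unit_vec N ` {..<l})"
    by (intro in_span_top_unit_vecsI fixed_vanishing_if_last_zero)
  then have "u' + (u $ (N - 1)) \<cdot>\<^sub>v x \<in> V.span (insert x (unit_vec N ` {..<l}))"
    by (rule V.add_smult_in_span_insert[rotated 2]) (use x(1) in auto)
  moreover have "u' + (u $ (N - 1)) \<cdot>\<^sub>v x = u" unfolding u'_def by (rule eq_vecI) (use u x in auto)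
  ultimately show ?thesis by simp
qed

lemma last_col_stable_pow_C:
  assumes "\<forall>i\<in>{p..<N - 1}. c $ i = 0" and "c $ (N - 1) = 1"
    and stable: "C ^\<^sub>m Suc K = C ^\<^sub>m K" and "last rs \<le> K"
  shows "C *\<^sub>v col (C ^\<^sub>m K) (N - 1) = col (C ^\<^sub>m K) (N - 1)" and "col (C ^\<^sub>m K) (N - 1) $ (N - 1) = 1"
  using col_stable_pow_fixed[OF C_carrier stable] pow_C_last_unit_vec[OF assms(1,2,4)]
    col_eq_mult_unit_vec[OF pow_carrier_mat[OF C_carrier]] p_less_N by simp_all

lemma semi_idempotent_srk_if_last_col_unit:
  assumes c_vanish: "\<forall>i\<in>{p..<N - 1}. c $ i = 0" and c_last: "c $ (N - 1) = 1"
    and c_top: "\<forall>i<l. c $ i = 0"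
  shows "semi_idempotent N C \<and> srk N C = Suc l"
proof -
  define K where "K = sum_list rs + last rs"
  have stable: "C ^\<^sub>m Suc K = C ^\<^sub>m K"
    using pow_C_stable_if_last_col_unit[OF assms] unfolding K_def .
  have P: "C ^\<^sub>m K \<in> carrier_mat N N" using C_carrier by simp
  have N1: "N - 1 < N" "\<not> N - 1 < l" using l_le_p p_less_N by auto
  define x where "x = col (C ^\<^sub>m K) (N - 1)"
  have x: "x \<in> carrier_vec N" "C *\<^sub>v x = x" "x $ (N - 1) = 1"
    using P last_col_stable_pow_C[OF c_vanish c_last stable] N1 unfolding x_def K_def by auto
  define E where "E = (unit_vec N ` {..<l} :: 'a vec set)"
  have "set (cols (C ^\<^sub>m K)) \<subseteq> V.span (insert x E)"
  proof
    fix u assume "u \<in> set (cols (C ^\<^sub>m K))"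
    then obtain j where j: "j < N" "u = col (C ^\<^sub>m K) j" using P unfolding set_cols_eq by auto
    then have "u \<in> carrier_vec N" "C *\<^sub>v u = u"
      using P col_stable_pow_fixed[OF C_carrier stable] by auto
    then show "u \<in> V.span (insert x E)" unfolding E_def by (rule fixed_in_span_insert_top_unit_vecs[OF x])
  qed
  moreover have "insert x E \<subseteq> set (cols (C ^\<^sub>m K))"
    using top_unit_vecs_subset_cols_pow_C P N1 unfolding E_def x_def set_cols_eq by auto
  moreover have "V.lin_indpt (insert x E)"
    unfolding E_def by (rule V.lin_indpt_insert_unit_vecs[OF _ x(1) N1(1)]) (use N1 x in auto)
  ultimately have "V.rank (C ^\<^sub>m K) = card (insert x E)"
    using V.rank_eq_card_indpt_spanning[OF P] by blast
  moreover have "x \<notin> E" using x N1 unfolding E_def by auto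
  ultimately have "V.rank (C ^\<^sub>m K) = Suc l"
    using card_top_unit_vecs unfolding E_def by simp
  then show ?thesis
    using pow_stable_imp_semi_idempotent[OF C_carrier stable] srk_eq_rank_stable_pow[OF stable] by simp
qed

lemma last_block_vanishing_of_mult_vec_C:
  assumes t: "t \<in> {p..<N}" "c $ t \<noteq> 0" and c_vanish: "\<forall>i\<in>{p..<t}. c $ i = 0"
    and w: "w \<in> carrier_vec N" "\<forall>i\<in>{p..<t}. w $ i = 0"
    and Cw: "\<forall>i\<in>{p..<N}. (C *\<^sub>v w) $ i = 0"
  shows "\<forall>i\<in>{p..<N}. w $ i = 0"
proof -
  have "t = p \<or> w $ (t - 1) = 0" using w(2) t(1) by (cases "t = p") auto
  then have "(C *\<^sub>v w) $ t = c $ t * w $ (N - 1)"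
    using index_mult_vec_C_last_block[OF w(1), of t] t(1) by auto
  moreover have "(C *\<^sub>v w) $ t = 0" using Cw t(1) by blast
  ultimately have last: "w $ (N - 1) = 0" using t(2) by simp
  show ?thesis
  proof
    fix i assume i: "i \<in> {p..<N}"
    show "w $ i = 0"
    proof (cases "i = N - 1")
      case False
      then have "Suc i \<in> {p..<N}" "Suc i \<noteq> p" using i by auto
      then show ?thesis using index_mult_vec_C_last_block[OF w(1), of "Suc i"] Cw last by auto
    qed (use last in simp)
  qed
qed

lemma last_block_vanishing_of_pow_C:
  assumes t: "t \<in> {p..<N}" "c $ t \<noteq> 0" and c_vanish: "\<forall>i\<in>{p..<t}. c $ i = 0"
  shows "w \<in> carrier_vec N \<Longrightarrow> \<forall>i\<in>{p..<t}. w $ i = 0 \<Longrightarrow>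
    \<forall>i\<in>{p..<N}. ((C ^\<^sub>m m) *\<^sub>v w) $ i = 0 \<Longrightarrow> \<forall>i\<in>{p..<N}. w $ i = 0"
proof (induction m arbitrary: w)
  case 0
  then show ?case using C_carrier by simp
next
  case (Suc m)
  have Cw: "C *\<^sub>v w \<in> carrier_vec N" using Suc.prems(1) C_carrier by simp
  have "\<forall>i\<in>{p..<t}. (C *\<^sub>v w) $ i = 0"
    using last_block_zeros_shift[where m = "t - p", OF _ c_vanish Suc.prems(1)] Suc.prems(2) t(1) by auto
  moreover note pow_mat_Suc_mult_vec_right[OF C_carrier Suc.prems(1), of m]
  ultimately have "\<forall>i\<in>{p..<N}. (C *\<^sub>v w) $ i = 0" using Suc.IH[OF Cw] Suc.prems(3) by simp
  then show ?case by (rule last_block_vanishing_of_mult_vec_C[OF t c_vanish Suc.prems(1,2)])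
qed

lemma unit_vec_fixed_on_last_block:
  assumes t: "t \<in> {p..<N}" and agree: "\<forall>i\<in>{p..<N}. (C *\<^sub>v unit_vec N t) $ i = unit_vec N t $ i"
  shows "t = N - 1" and "c $ (N - 1) = 1"
proof -
  have e: "unit_vec N t \<in> carrier_vec N" by simp
  show t_last: "t = N - 1"
  proof (rule ccontr)
    assume "t \<noteq> N - 1"
    then have "Suc t \<in> {p..<N}" "Suc t \<noteq> p" using t by auto
    then show False
      using index_mult_vec_C_last_block[OF e, of "Suc t"] agree \<open>t \<noteq> N - 1\<close> t by auto
  qed
  have "p = N - 1 \<or> unit_vec N t $ (N - 1 - 1) = 0"
  proof (cases "p = N - 1")
    case False
    then have "N - 1 - 1 \<noteq> N - 1" using p_less_N by linarith
    then show ?thesis using t_last by simp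
  qed simp
  then have "(C *\<^sub>v unit_vec N t) $ (N - 1) = c $ (N - 1)"
    using index_mult_vec_C_last_block[OF e, of "N - 1"] t_last t by auto
  then show "c $ (N - 1) = 1" using agree t_last t by auto
qed

text \<open>For the first index \<open>t\<close> of the last block with \<open>c $ t \<noteq> 0\<close>, the vector
  \<open>C e\<^sub>t - e\<^sub>t\<close> vanishes on \<open>{p..<t}\<close> and is annihilated by \<open>C ^ k\<close>; this propagates
  to the whole last block and forces \<open>t = N - 1\<close> and \<open>c $ (N - 1) = 1\<close>.\<close>

lemma last_col_of_pow_stable:
  assumes stable: "C ^\<^sub>m Suc k = C ^\<^sub>m k" and nonzero: "\<exists>i\<in>{p..<N}. c $ i \<noteq> 0"
  shows "\<forall>i\<in>{p..<N - 1}. c $ i = 0" and "c $ (N - 1) = 1"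
proof -
  define t where "t = (LEAST i. i \<in> {p..<N} \<and> c $ i \<noteq> 0)"
  obtain i0 where "i0 \<in> {p..<N} \<and> c $ i0 \<noteq> 0" using nonzero by blast
  then have t: "t \<in> {p..<N}" "c $ t \<noteq> 0"
    unfolding t_def using LeastI[where P = "\<lambda>i. i \<in> {p..<N} \<and> c $ i \<noteq> 0"] by blast+
  have c_vanish: "\<forall>i\<in>{p..<t}. c $ i = 0"
  proof
    fix i assume i: "i \<in> {p..<t}"
    then have "\<not> (i \<in> {p..<N} \<and> c $ i \<noteq> 0)" using not_less_Least[of i] unfolding t_def by auto
    then show "c $ i = 0" using i t(1) by auto
  qed
  define e where "e = (unit_vec N t :: 'a vec)"
  have e: "e \<in> carrier_vec N" "\<forall>i\<in>{p..<t}. e $ i = 0" unfolding e_def using t by auto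
  have Ce: "C *\<^sub>v e \<in> carrier_vec N" using e C_carrier by simp
  have "\<forall>i\<in>{p..<t}. (C *\<^sub>v e) $ i = 0"
    using last_block_zeros_shift[where m = "t - p", OF _ c_vanish e(1)] e(2) t(1) by auto
  then have w: "C *\<^sub>v e - e \<in> carrier_vec N" "\<forall>i\<in>{p..<t}. (C *\<^sub>v e - e) $ i = 0"
    using e Ce t(1) by auto
  have "(C ^\<^sub>m k) *\<^sub>v (C *\<^sub>v e - e) = (C ^\<^sub>m Suc k) *\<^sub>v e - (C ^\<^sub>m k) *\<^sub>v e"
    using mult_minus_distrib_mat_vec[OF pow_carrier_mat[OF C_carrier] Ce e(1), of k]
      pow_mat_Suc_mult_vec_right[OF C_carrier e(1), of k] by simp
  also have "\<dots> = 0\<^sub>v N" using stable e C_carrier by simp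
  finally have "\<forall>i\<in>{p..<N}. ((C ^\<^sub>m k) *\<^sub>v (C *\<^sub>v e - e)) $ i = 0" by simp
  then have "\<forall>i\<in>{p..<N}. (C *\<^sub>v e - e) $ i = 0"
    by (rule last_block_vanishing_of_pow_C[OF t c_vanish w])
  then have "\<forall>i\<in>{p..<N}. (C *\<^sub>v e) $ i = e $ i" using Ce e by auto
  then have "t = N - 1" "c $ (N - 1) = 1"
    using unit_vec_fixed_on_last_block[OF t(1)] unfolding e_def by auto
  then show "\<forall>i\<in>{p..<N - 1}. c $ i = 0" and "c $ (N - 1) = 1" using c_vanish by auto
qed

lemma top_of_pow_stable:
  assumes stable: "C ^\<^sub>m Suc k = C ^\<^sub>m k"
    and c_vanish: "\<forall>i\<in>{p..<N - 1}. c $ i = 0" and c_last: "c $ (N - 1) = 1"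
  shows "\<forall>i<l. c $ i = 0"
proof (intro allI impI)
  fix i assume i: "i < l"
  define x where "x = (C ^\<^sub>m (k + last rs)) *\<^sub>v unit_vec N (N - 1)"
  have x: "x \<in> carrier_vec N" "C *\<^sub>v x = x" "x $ (N - 1) = 1"
    using pow_mat_stable_fixed[OF C_carrier stable, of "k + last rs"]
      pow_C_last_unit_vec[OF c_vanish c_last, of "k + last rs"] C_carrier
    unfolding x_def by auto
  then show "c $ i = 0" using index_mult_vec_C_top[OF x(1) i] by simp
qed

lemma semi_idempotent_cases:
  assumes "semi_idempotent N C"
  shows "(\<forall>i\<in>{p..<N}. c $ i = 0) \<or>
    (\<forall>i\<in>{p..<N - 1}. c $ i = 0) \<and> c $ (N - 1) = 1 \<and> (\<forall>i<l. c $ i = 0)"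
proof -
  obtain k where "C ^\<^sub>m Suc k = C ^\<^sub>m k"
    using semi_idempotent_imp_pow_stable[OF C_carrier assms] .
  then show ?thesis using last_col_of_pow_stable top_of_pow_stable by blast
qed

lemma semi_idempotent_srk_eq_l_iff:
  "semi_idempotent N C \<and> srk N C = l \<longleftrightarrow> (\<forall>i\<in>{p..<N}. c $ i = 0)"
  using semi_idempotent_cases semi_idempotent_srk_if_last_block_zero
    semi_idempotent_srk_if_last_col_unit by force

lemma semi_idempotent_srk_eq_Suc_l_iff:
  "semi_idempotent N C \<and> srk N C = Suc l \<longleftrightarrow>
    (\<forall>i\<in>{p..<N - 1}. c $ i = 0) \<and> c $ (N - 1) = 1 \<and> (\<forall>i<l. c $ i = 0)"
  using semi_idempotent_cases semi_idempotent_srk_if_last_block_zero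
    semi_idempotent_srk_if_last_col_unit by force

lemma col_C_vanishing:
  assumes j: "j < N - 1" and i: "i < N" "i \<notin> nonzero_rows"
  shows "col C j $ i = 0"
  using i j C_carrier index_C[OF i(1), of j] unfolding nonzero_rows_def by auto

lemma unit_vecs_nonzero_rows_subset_cols: "unit_vec N ` nonzero_rows \<subseteq> set (cols C)"
proof
  fix x :: "'a vec" assume "x \<in> unit_vec N ` nonzero_rows"
  then obtain i where i: "i \<in> nonzero_rows" "x = unit_vec N i" by blast
  define j where "j = (if i < l then i else i - 1)"
  have i_row: "i < N" "i < l \<or> \<not> block_start rs (i - l)" using i(1) unfolding nonzero_rows_def by auto
  have "i \<noteq> l" if "\<not> i < l" using that i_row block_start_l by auto
  then have i_cases: "i < N" "i < l \<or> l < i \<and> \<not> block_start rs (i - l)" using i_row by auto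
  then have j: "j < N - 1" "j \<noteq> N - 1" using l_le_p p_less_N unfolding j_def by auto
  have "col C j $ k = unit_vec N i $ k" if k: "k < N" for k
  proof -
    have entry: "col C j $ k = (if k < l then (if k = j then 1 else 0)
        else if k = Suc j \<and> \<not> block_start rs (k - l) then 1 else 0)"
      using C_carrier index_C[OF k, of j] j k by simp
    show ?thesis
    proof (cases "i < l")
      case True
      then have "k = Suc j \<Longrightarrow> \<not> k < l \<Longrightarrow> k = l" unfolding j_def by simp
      then show ?thesis unfolding entry using True k i_cases block_start_l unfolding j_def by auto
    next
      case False
      then have "j = i - 1" "l \<le> j" "Suc j = i" using i_cases unfolding j_def by auto
      then show ?thesis unfolding entry using False k i_cases by auto
    qed
  qed
  then have "col C j = unit_vec N i" using C_carrier by (intro eq_vecI) auto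
  moreover have "j \<in> {..<dim_col C}" using j C_carrier by auto
  ultimately show "x \<in> set (cols C)" using i(2) unfolding set_cols_eq by (metis image_eqI)
qed

lemma rank_C:
  "mrank N C = card nonzero_rows + (if \<forall>i<N. i \<notin> nonzero_rows \<longrightarrow> c $ i = 0 then 0 else 1)"
proof -
  have rows: "nonzero_rows \<subseteq> {..<N}" unfolding nonzero_rows_def by auto
  define E where "E = (unit_vec N ` nonzero_rows :: 'a vec set)"
  have E: "E \<subseteq> set (cols C)" "V.lin_indpt E"
    unfolding E_def by (rule unit_vecs_nonzero_rows_subset_cols, rule V.lin_indpt_unit_vecs[OF rows])
  have card_E: "card E = card nonzero_rows"
    unfolding E_def using rows by (subst card_image) (auto simp: inj_on_def)
  have c_col: "c \<in> set (cols C)" using C_carrier p_less_N unfolding set_cols_eq by auto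
  have cols: "set (cols C) \<subseteq> insert c (V.span E)"
  proof
    fix u assume "u \<in> set (cols C)"
    then obtain j where j: "j < N" "u = col C j" using C_carrier unfolding set_cols_eq by auto
    have "col C j \<in> V.span E" if "j \<noteq> N - 1"
      unfolding E_def using V.in_span_unit_vecsI[OF rows, of "col C j"] col_C_vanishing[of j] that j C_carrier
      by auto
    then show "u \<in> insert c (V.span E)" using j by auto
  qed
  have "c \<in> V.span E \<longleftrightarrow> (\<forall>i<N. i \<notin> nonzero_rows \<longrightarrow> c $ i = 0)"
    using V.in_span_unit_vecsI[OF rows c_carrier] V.span_unit_vecs_vanishing[OF rows] unfolding E_def by blast
  then show ?thesis using V.rank_of_cols_in_span_insert[OF C_carrier E c_col cols] card_E by simp
qed

end

section \<open>The counting identities\<close>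

context jordan_blocks
begin

lemma last_col_A_prime: "col (A_prime l rs :: 'a::field mat) (N - 1) = 0\<^sub>v N"
proof (rule eq_vecI)
  fix i assume "i < dim_vec (0\<^sub>v N :: 'a vec)"
  then have i: "i < N" by simp
  have N1: "N - 1 < N" "i < l \<longrightarrow> i \<noteq> N - 1" "i \<noteq> Suc (N - 1)" using i l_le_p p_less_N by auto
  then have "(A_prime l rs :: 'a mat) $$ (i, N - 1) = 0"
    using index_A_prime[OF blocks_nonempty i N1(1)] by auto
  then show "col (A_prime l rs :: 'a mat) (N - 1) $ i = 0\<^sub>v N $ i" using i N1 by simp
qed simp

lemma A_prime_in_last_col_repl: "(A_prime l rs :: 'a::field mat) \<in> last_col_repl N (A_prime l rs)"
  using A_prime_carrier unfolding last_col_repl_def by blast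

lemma srk_A_prime: "srk N (A_prime l rs :: 'a::field mat) = l"
proof -
  interpret last_col_repl_A_prime l rs "A_prime l rs :: 'a mat"
    by unfold_locales (rule A_prime_in_last_col_repl)
  have "\<forall>i\<in>{p..<N}. col (A_prime l rs :: 'a mat) (N - 1) $ i = 0"
    using last_col_A_prime by (metis atLeastLessThan_iff index_zero_vec(1))
  then show ?thesis using semi_idempotent_srk_eq_l_iff by blast
qed

lemma rank_A_prime: "mrank N (A_prime l rs :: 'a::field mat) = card nonzero_rows"
proof -
  interpret last_col_repl_A_prime l rs "A_prime l rs :: 'a mat"
    by unfold_locales (rule A_prime_in_last_col_repl)
  have "\<forall>i<N. col (A_prime l rs :: 'a mat) (N - 1) $ i = 0"
    using last_col_A_prime by (metis index_zero_vec(1))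
  then show ?thesis using rank_C by simp
qed

lemma card_semi_idempotent_srk_eq_l:
  fixes R :: "'a::field vec \<Rightarrow> bool"
  shows "card {C \<in> last_col_repl N (A_prime l rs). semi_idempotent N C \<and> srk N C = l \<and> R (col C (N - 1))} =
    card {v \<in> carrier_vec N. R v \<and> (\<forall>i\<in>{p..<N - 1}. v $ i = 0) \<and> v $ (N - 1) = 0}"
    (is "card ?S = card {v \<in> carrier_vec N. ?Q v}")
proof -
  have split: "{p..<N} = insert (N - 1) {p..<N - 1}" using p_less_N by auto
  have "semi_idempotent N C \<and> srk N C = l \<and> R (col C (N - 1)) \<longleftrightarrow> ?Q (col C (N - 1))"
    if "C \<in> last_col_repl N (A_prime l rs)" for C :: "'a mat"
  proof -
    interpret last_col_repl_A_prime l rs C by unfold_locales (rule that)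
    show ?thesis using semi_idempotent_srk_eq_l_iff unfolding split by auto
  qed
  then have "?S = {C \<in> last_col_repl N (A_prime l rs). ?Q (col C (N - 1))}" by blast
  then show ?thesis using card_last_col_repl[OF A_prime_carrier N_pos, where Q = ?Q] by simp
qed

lemma card_semi_idempotent_srk_eq_Suc_l:
  fixes R :: "'a::field vec \<Rightarrow> bool"
  shows "card {C \<in> last_col_repl N (A_prime l rs). semi_idempotent N C \<and> srk N C = Suc l \<and> R (col C (N - 1))} =
    card {v \<in> carrier_vec N. R v \<and> (\<forall>i\<in>{p..<N - 1}. v $ i = 0) \<and> (\<forall>i<l. v $ i = 0) \<and> v $ (N - 1) = 1}"
    (is "card ?S = card {v \<in> carrier_vec N. ?Q v}")
proof -
  have "semi_idempotent N C \<and> srk N C = Suc l \<and> R (col C (N - 1)) \<longleftrightarrow> ?Q (col C (N - 1))"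
    if "C \<in> last_col_repl N (A_prime l rs)" for C :: "'a mat"
  proof -
    interpret last_col_repl_A_prime l rs C by unfold_locales (rule that)
    show ?thesis using semi_idempotent_srk_eq_Suc_l_iff by auto
  qed
  then have "?S = {C \<in> last_col_repl N (A_prime l rs). ?Q (col C (N - 1))}" by blast
  then show ?thesis using card_last_col_repl[OF A_prime_carrier N_pos, where Q = ?Q] by simp
qed

lemma e_count_A_prime:
  "e_count N (A_prime l rs :: 'a::{field,finite} mat) l =
    card (UNIV :: 'a set) ^ l * e_count N (A_prime l rs :: 'a mat) (Suc l)"
proof -
  define G where "G v \<longleftrightarrow> (\<forall>i\<in>{p..<N - 1}. v $ i = (0::'a))" for v
  have "e_count N (A_prime l rs :: 'a mat) l = card {v \<in> carrier_vec N. G v \<and> v $ (N - 1) = 0}"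
    using card_semi_idempotent_srk_eq_l[where R = "\<lambda>_. True"] unfolding e_count_def G_def by simp
  moreover have "e_count N (A_prime l rs :: 'a mat) (Suc l) =
      card {v \<in> carrier_vec N. G v \<and> (\<forall>i<l. v $ i = 0) \<and> v $ (N - 1) = 1}"
    using card_semi_idempotent_srk_eq_Suc_l[where R = "\<lambda>_. True"] unfolding e_count_def G_def by simp
  moreover have "G v = G w" if "\<forall>i\<in>{l..<N - 1}. v $ i = w $ i" for v w
    using that l_le_p unfolding G_def by auto
  ultimately show ?thesis using card_vecs_last_zero[OF l_less_N, of G] by simp
qed

lemma e_count2_A_prime:
  assumes "1 < last rs"
  shows "e_count2 N (A_prime l rs :: 'a::{field,finite} mat) (mrank N (A_prime l rs :: 'a mat)) l =
    card (UNIV :: 'a set) ^ l * e_count2 N (A_prime l rs :: 'a mat) (mrank N (A_prime l rs :: 'a mat)) (Suc l)"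
proof -
  define R where "R v \<longleftrightarrow> (\<forall>i<N. i \<notin> nonzero_rows \<longrightarrow> v $ i = (0::'a))" for v
  define G where "G v \<longleftrightarrow> R v \<and> (\<forall>i\<in>{p..<N - 1}. v $ i = (0::'a))" for v
  have "mrank N C = mrank N (A_prime l rs :: 'a mat) \<longleftrightarrow> R (col C (N - 1))"
    if "C \<in> last_col_repl N (A_prime l rs)" for C :: "'a mat"
  proof -
    interpret last_col_repl_A_prime l rs C by unfold_locales (rule that)
    show ?thesis using rank_C rank_A_prime[where 'a = 'a] unfolding R_def by simp
  qed
  then have e_count2_eq: "e_count2 N (A_prime l rs :: 'a mat) (mrank N (A_prime l rs :: 'a mat)) j =
      card {C \<in> last_col_repl N (A_prime l rs). semi_idempotent N C \<and> srk N C = j \<and> R (col C (N - 1))}"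
    for j unfolding e_count2_def by (intro arg_cong[where f = card] Collect_cong) auto
  have "e_count2 N (A_prime l rs :: 'a mat) (mrank N (A_prime l rs :: 'a mat)) l =
      card {v \<in> carrier_vec N. G v \<and> v $ (N - 1) = 0}"
    using card_semi_idempotent_srk_eq_l[where R = R] unfolding e_count2_eq G_def by simp
  moreover have "e_count2 N (A_prime l rs :: 'a mat) (mrank N (A_prime l rs :: 'a mat)) (Suc l) =
      card {v \<in> carrier_vec N. G v \<and> (\<forall>i<l. v $ i = 0) \<and> v $ (N - 1) = 1}"
    using card_semi_idempotent_srk_eq_Suc_l[where R = R] unfolding e_count2_eq G_def by simp
  moreover have "G v = G w" if "\<forall>i\<in>{l..<N - 1}. v $ i = w $ i" for v w
  proof -
    have "p < N - 1" "N - 1 < N" using assms last_block_le by linarith+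
    then have "\<not> block_start rs (N - 1 - l)" by (rule not_block_start_after_p)
    then have "i \<in> {l..<N - 1}" if "i < N" "i \<notin> nonzero_rows" for i
      using that unfolding nonzero_rows_def by (cases "i = N - 1") auto
    then show ?thesis using that l_le_p unfolding G_def R_def by auto
  qed
  ultimately show ?thesis using card_vecs_last_zero[OF l_less_N, of G] by simp
qed

end

theorem lemma3p2:
  fixes l :: nat and rs :: "nat list"
  defines "N \<equiv> l + sum_list rs"
  defines "A' \<equiv> (A_prime l rs :: 'a::{field, finite} mat)"
  assumes pos: "\<forall>r\<in>set rs. 0 < r"
    and nonempty: "rs \<noteq> []"
  shows "(e_count N A' (srk N A') = card (UNIV :: 'a set) ^ srk N A' * e_count N A' (srk N A' + 1)) \<and>
      (last rs > 1 \<longrightarrow>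
      e_count2 N A' (mrank N A') (srk N A') = card (UNIV :: 'a set) ^ srk N A' * e_count2 N A' (mrank N A') (srk N A' + 1))"
proof -
  interpret jordan_blocks l rs using pos nonempty by unfold_locales
  show ?thesis
    unfolding N_def A'_def srk_A_prime
    using e_count_A_prime[where 'a = 'a] e_count2_A_prime[where 'a = 'a] by simp
qed

end
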